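(* Let $p\in(0,\infty]$, $\lambda\in F'$, and let $K$ be a compact convex subset of $F'$ such that $\mathcal B^p_K(\mathcal N)\ne\{0\}$. Then multiplication by the function $(\zeta,z)\mapsto e^{i\langle\lambda_{\mathbb C},z\rangle}$ induces a continuous linear mapping $\mathcal B^p_K(\mathcal N)\to\mathcal B^p_{K+\lambda}(\mathcal N)$ if and only if $\lambda\in\Phi(E)^\circ$.
   Context: Let $E$ be a complex Hilbert space, $F$ a real Hilbert space, $F'$ its dual, $F_{\mathbb C}$ its complexification, and $\Phi\colon E\times E\to F_{\mathbb C}$ a hermitian map (complex-linear in the first variable, conjugate-linear in the second); $\Phi(\zeta)=\Phi(\zeta,\zeta)\in F$. For $\lambda\in F'$, $\lambda_{\mathbb C}$ is its complex-linear extension to $F_{\mathbb C}$. $\mathcal N=E\times F$ with group law $(\zeta,x)(\zeta',x')=(\zeta+\zeta',x+x'+2\operatorname{Im}\Phi(\zeta,\zeta'))$ and Lebesgue measure. $\rho(\zeta,z)=\operatorname{Im}z-\Phi(\zeta)$; $f_0(\zeta,x)=f(\zeta,x+i\Phi(\zeta))$. For compact convex $K\subseteq F'$, $H_K(h)=\sup_{\lambda\in-K}\langle\lambda,h\rangle$. $\widetilde{\mathcal E}_K$: entire $f$ on $E\times F_{\mathbb C}$ such that for all $\varepsilon>0$ there is $C_\varepsilon$ with $|f(\zeta,z)|\le C_\varepsilon\exp(C_\varepsilon(|\zeta|^2+|\operatorname{Re}z|)+H_{K+\overline B_{F'}(0,\varepsilon)}(\rho(\zeta,z)))$. $\mathcal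 B^p_K(\mathcal N)=\{f\in\widetilde{\mathcal E}_K:f_0\in L^p(\mathcal N)\}$, $\|f\|=\|f_0\|_{L^p(\mathcal N)}$. $\Phi(E)^\circ=\{\lambda\in F':\langle\lambda,\Phi(\zeta)\rangle\ge0\ \forall\zeta\in E\}$. *)

theory Defs
  imports "HOL-Analysis.Analysis" "HOL-Probability.Essential_Supremum"
begin

text \<open>Finite-dimensional setting (Lebesgue measure on N requires it):
  E = complex^'n (complex Hilbert space), F = real^'m (real Hilbert space),
  F' identified with F via the inner product, F_C = complex^'m.\<close>

definition hermitian_map :: "(complex^'n \<Rightarrow> complex^'n \<Rightarrow> complex^'m) \<Rightarrow> bool" where
  "hermitian_map Phi \<longleftrightarrow>
     (\<forall>a b c. Phi (a + b) c = Phi a c + Phi b c) \<and>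
     (\<forall>c a b. Phi (c *s a) b = c *s Phi a b) \<and>
     (\<forall>a b c. Phi a (b + c) = Phi a b + Phi a c) \<and>
     (\<forall>c a b. Phi a (c *s b) = cnj c *s Phi a b) \<and>
     (\<forall>a b. Phi b a = (\<chi> j. cnj (Phi a b $ j)))"

definition PhiF :: "(complex^'n \<Rightarrow> complex^'n \<Rightarrow> complex^'m) \<Rightarrow> complex^'n \<Rightarrow> real^'m" where
  "PhiF Phi \<zeta> = (\<chi> j. Re (Phi \<zeta> \<zeta> $ j))"

definition ReF :: "complex^'m \<Rightarrow> real^'m" where "ReF z = (\<chi> j. Re (z $ j))"
definition ImF :: "complex^'m \<Rightarrow> real^'m" where "ImF z = (\<chi> j. Im (z $ j))"
definition ofF :: "real^'m \<Rightarrow> complex^'m" where "ofF x = (\<chi> j. complex_of_real (x $ j))"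

definition lamC :: "real^'m \<Rightarrow> complex^'m \<Rightarrow> complex" where
  "lamC l z = (\<Sum>j\<in>UNIV. complex_of_real (l $ j) * z $ j)"

definition rho :: "(complex^'n \<Rightarrow> complex^'n \<Rightarrow> complex^'m) \<Rightarrow> complex^'n \<Rightarrow> complex^'m \<Rightarrow> real^'m" where
  "rho Phi \<zeta> z = ImF z - PhiF Phi \<zeta>"

definition f0 :: "(complex^'n \<Rightarrow> complex^'n \<Rightarrow> complex^'m) \<Rightarrow> ((complex^'n) \<times> (complex^'m) \<Rightarrow> complex)
                  \<Rightarrow> (complex^'n) \<times> (real^'m) \<Rightarrow> complex" where
  "f0 Phi f = (\<lambda>(\<zeta>, x). f (\<zeta>, ofF x + \<i> *s ofF (PhiF Phi \<zeta>)))"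

text \<open>Support function H_K(h) = sup over lambda in -K of <lambda,h> (extended real; -infinity for empty K).\<close>
definition HK :: "(real^'m) set \<Rightarrow> real^'m \<Rightarrow> ereal" where
  "HK K h = (SUP l\<in>uminus ` K. ereal (l \<bullet> h))"

definition exp_ereal :: "ereal \<Rightarrow> ereal" where
  "exp_ereal x = (case x of ereal r \<Rightarrow> ereal (exp r) | PInfty \<Rightarrow> \<infinity> | MInfty \<Rightarrow> 0)"

definition msum_ball :: "(real^'m) set \<Rightarrow> real \<Rightarrow> (real^'m) set" where
  "msum_ball K e = {k + b | k b. k \<in> K \<and> b \<in> cball 0 e}"

definition entire_fun :: "((complex^'n) \<times> (complex^'m) \<Rightarrow> complex) \<Rightarrow> bool" where
  "entire_fun f \<longleftrightarrow> (\<forall>x. \<exists>L. (f has_derivative L) (at x) \<and>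
      (\<forall>c v. L (c *s fst v, c *s snd v) = c * L v))"

definition Etilde :: "(complex^'n \<Rightarrow> complex^'n \<Rightarrow> complex^'m) \<Rightarrow> (real^'m) set
                      \<Rightarrow> ((complex^'n) \<times> (complex^'m) \<Rightarrow> complex) set" where
  "Etilde Phi K = {f. entire_fun f \<and>
     (\<forall>e>0. \<exists>C. \<forall>\<zeta> z. ereal (norm (f (\<zeta>, z)))
        \<le> ereal (C * exp (C * ((norm \<zeta>)\<^sup>2 + norm (ReF z)))) * exp_ereal (HK (msum_ball K e) (rho Phi \<zeta> z)))}"

text \<open>L^p on N = E x F with Lebesgue measure, p in (0,infinity].\<close>
definition memLp :: "ennreal \<Rightarrow> ('a::euclidean_space \<Rightarrow> complex) \<Rightarrow> bool" where
  "memLp p g \<longleftrightarrow> g \<in> borel_measurable lborel \<and>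
     (if p = \<infinity> then esssup lborel (\<lambda>x. ereal (norm (g x))) < \<infinity>
      else (\<integral>\<^sup>+ x. ennreal (norm (g x) powr enn2real p) \<partial>lborel) < \<infinity>)"

definition Lp_norm :: "ennreal \<Rightarrow> ('a::euclidean_space \<Rightarrow> complex) \<Rightarrow> real" where
  "Lp_norm p g = (if p = \<infinity> then real_of_ereal (esssup lborel (\<lambda>x. ereal (norm (g x))))
      else (enn2real (\<integral>\<^sup>+ x. ennreal (norm (g x) powr enn2real p) \<partial>lborel)) powr (1 / enn2real p))"

definition Bspace :: "(complex^'n \<Rightarrow> complex^'n \<Rightarrow> complex^'m) \<Rightarrow> ennreal \<Rightarrow> (real^'m) set
                      \<Rightarrow> ((complex^'n) \<times> (complex^'m) \<Rightarrow> complex) set" where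
  "Bspace Phi p K = {f \<in> Etilde Phi K. memLp p (f0 Phi f)}"

definition Bnorm :: "(complex^'n \<Rightarrow> complex^'n \<Rightarrow> complex^'m) \<Rightarrow> ennreal
                     \<Rightarrow> ((complex^'n) \<times> (complex^'m) \<Rightarrow> complex) \<Rightarrow> real" where
  "Bnorm Phi p f = Lp_norm p (f0 Phi f)"

definition polar_PhiE :: "(complex^'n \<Rightarrow> complex^'n \<Rightarrow> complex^'m) \<Rightarrow> (real^'m) set" where
  "polar_PhiE Phi = {l. \<forall>\<zeta>. l \<bullet> PhiF Phi \<zeta> \<ge> 0}"

definition mult_exp :: "real^'m \<Rightarrow> ((complex^'n) \<times> (complex^'m) \<Rightarrow> complex) \<Rightarrow> ((complex^'n) \<times> (complex^'m) \<Rightarrow> complex)" where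
  "mult_exp l f = (\<lambda>(\<zeta>, z). exp (\<i> * lamC l z) * f (\<zeta>, z))"

text \<open>T maps B^p_K into B^p_{K'} and is continuous for the (quasi-)norm topologies
  (these are metrizable, so sequential continuity is continuity).\<close>
definition cont_map_B :: "(complex^'n \<Rightarrow> complex^'n \<Rightarrow> complex^'m) \<Rightarrow> ennreal \<Rightarrow> (real^'m) set \<Rightarrow> (real^'m) set
     \<Rightarrow> (((complex^'n) \<times> (complex^'m) \<Rightarrow> complex) \<Rightarrow> ((complex^'n) \<times> (complex^'m) \<Rightarrow> complex)) \<Rightarrow> bool" where
  "cont_map_B Phi p K K' T \<longleftrightarrow>
     (\<forall>f\<in>Bspace Phi p K. T f \<in> Bspace Phi p K') \<and>
     (\<forall>fs f. (\<forall>k. fs k \<in> Bspace Phi p K) \<longrightarrow> f \<in> Bspace Phi p K \<longrightarrow>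
        (\<lambda>k. Bnorm Phi p (fs k - f)) \<longlonglongrightarrow> 0 \<longrightarrow>
        (\<lambda>k. Bnorm Phi p (T (fs k) - T f)) \<longlonglongrightarrow> 0)"

end

theory Submission
  imports Defs "HOL-Complex_Analysis.Conformal_Mappings"
begin

text \<open>
  Write \<open>\<lambda>\<close> for the functional and \<open>e(\<zeta>, z) = exp (i \<lambda>\<^sub>C(z))\<close>, so that
  \<open>|e(\<zeta>, z)| = exp (-\<langle>\<lambda>, Im z\<rangle>) = exp (-\<langle>\<lambda>, \<rho>(\<zeta>, z)\<rangle>) exp (-\<langle>\<lambda>, \<Phi>(\<zeta>)\<rangle>)\<close>.
  The first factor is exactly the change from \<open>H\<^sub>K\<close> to \<open>H\<^sub>K\<^sub>+\<^sub>\<lambda>\<close>, the second is the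
  modulus of \<open>e\<close> on the slice \<open>Im z = \<Phi>(\<zeta>)\<close> where \<open>f\<^sub>0\<close> lives. If \<open>\<lambda>\<close> lies in the polar of
  \<open>\<Phi>(E)\<close>, multiplication by \<open>e\<close> is therefore a contraction \<open>B\<^sup>p\<^sub>K \<rightarrow> B\<^sup>p\<^sub>K\<^sub>+\<^sub>\<lambda>\<close>.

  Conversely, take \<open>\<zeta>\<^sub>0\<close> with \<open>\<langle>\<lambda>, \<Phi>(\<zeta>\<^sub>0)\<rangle> < 0\<close> and \<open>f \<noteq> 0\<close> in \<open>B\<^sup>p\<^sub>K\<close>; by the identity
  theorem \<open>|f\<^sub>0|\<close> is bounded below on some ball. The holomorphic maps
  \<open>(\<zeta>, z) \<mapsto> (\<zeta> + w, z + i \<Phi>(w) + 2 i \<Phi>(\<zeta>, w))\<close> preserve \<open>\<rho>\<close> and induce on \<open>\<N>\<close> the left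
  translation by \<open>(w, 0)\<close>, a shear preserving Lebesgue measure; so they preserve \<open>B\<^sup>p\<^sub>K\<close> and
  its norm. For \<open>w = t \<zeta>\<^sub>0\<close> the weight \<open>exp (-\<langle>\<lambda>, \<Phi>(\<zeta> - w)\<rangle>)\<close> grows like \<open>exp (c t\<^sup>2)\<close>
  on that ball, so suitably scaled translates of \<open>f\<close> tend to \<open>0\<close> while their products with
  \<open>e\<close> do not.
\<close>

lemma ReF_nth [simp]: "ReF z $ j = Re (z $ j)" by (simp add: ReF_def)
lemma ImF_nth [simp]: "ImF z $ j = Im (z $ j)" by (simp add: ImF_def)
lemma ofF_nth [simp]: "ofF x $ j = complex_of_real (x $ j)" by (simp add: ofF_def)
lemma PhiF_nth [simp]: "PhiF Phi a $ j = Re (Phi a a $ j)" by (simp add: PhiF_def)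

lemma scaleR_vec_eq_smult: "(r::real) *\<^sub>R (v::complex^'k) = complex_of_real r *s v"
proof (rule vec_eq_iff[THEN iffD2], rule allI)
  fix i show "(r *\<^sub>R v) $ i = (complex_of_real r *s v) $ i"
    unfolding vector_scaleR_component vector_smult_component by (rule scaleR_conv_of_real)
qed

lemma norm_ReF_le: "norm (ReF z) \<le> norm z"
  unfolding norm_vec_def by (intro L2_set_mono) (auto simp: abs_Re_le_cmod)

lemma norm_ImF_le: "norm (ImF z) \<le> norm z"
  unfolding norm_vec_def by (intro L2_set_mono) (auto simp: abs_Im_le_cmod)

lemma norm_PhiF_le: "norm (PhiF Phi a) \<le> norm (Phi a a)"
proof -
  have "PhiF Phi a = ReF (Phi a a)" by (simp add: vec_eq_iff)
  then show ?thesis using norm_ReF_le by simp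
qed

lemma ImF_ofF_add: "ImF (ofF x + \<i> *s ofF v) = v"
  by (simp add: vec_eq_iff)

lemma lamC_smult: "lamC l (c *s v) = c * lamC l v"
  by (simp add: lamC_def sum_distrib_left algebra_simps)

lemma Im_lamC: "Im (lamC l z) = l \<bullet> ImF z"
  by (simp add: lamC_def inner_vec_def Im_sum)

lemma bounded_linear_ofF [bounded_linear]: "bounded_linear (ofF :: real^'m \<Rightarrow> complex^'m)"
  by (simp add: linear_conv_bounded_linear[symmetric] linearI vec_eq_iff scaleR_vec_eq_smult)

lemma bounded_linear_ReF [bounded_linear]: "bounded_linear (ReF :: complex^'m \<Rightarrow> real^'m)"
  by (simp add: linear_conv_bounded_linear[symmetric] linearI vec_eq_iff)

lemma bounded_linear_smult [bounded_linear]: "bounded_linear (\<lambda>v::complex^'m. c *s v)"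
  by (simp add: linear_conv_bounded_linear[symmetric] linearI vec_eq_iff algebra_simps
      scaleR_vec_eq_smult)

lemma bounded_linear_lamC [bounded_linear]: "bounded_linear (lamC l :: complex^'m \<Rightarrow> complex)"
  unfolding linear_conv_bounded_linear[symmetric]
  by (rule linearI) (simp_all add: lamC_def sum.distrib algebra_simps scaleR_vec_eq_smult
      lamC_smult[unfolded lamC_def] scaleR_conv_of_real sum_distrib_left)

lemma f0_apply: "f0 Phi f y = f (fst y, ofF (snd y) + \<i> *s ofF (PhiF Phi (fst y)))"
  by (simp add: f0_def split_beta)

lemma mult_exp_apply: "mult_exp l f y = exp (\<i> * lamC l (snd y)) * f y"
  by (simp add: mult_exp_def split_beta)

lemma norm_f0_mult_exp:
  "norm (f0 Phi (mult_exp l h) y) = exp (- (l \<bullet> PhiF Phi (fst y))) * norm (f0 Phi h y)"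
  by (simp add: f0_apply mult_exp_apply norm_mult Im_lamC ImF_ofF_add)

section \<open>\<open>L\<^sup>p\<close> quasi-norms\<close>

lemma enn2real_gt_0: "0 < p \<Longrightarrow> p \<noteq> \<infinity> \<Longrightarrow> 0 < enn2real p"
  by (simp add: enn2real_positive_iff less_top)

lemma Lp_norm_cong_norm:
  "(\<And>x. norm (F x) = norm (G x)) \<Longrightarrow> Lp_norm p F = Lp_norm p G"
  unfolding Lp_norm_def by simp

lemma memLp_cong_norm:
  assumes "memLp p G" "F \<in> borel_measurable lborel" "\<And>x. norm (F x) = norm (G x)"
  shows "memLp p F"
  using assms unfolding memLp_def by (cases "p = \<infinity>") simp_all

lemma esssup_norm_nonneg:
  fixes F :: "'a::euclidean_space \<Rightarrow> complex"
  shows "0 \<le> esssup lborel (\<lambda>x. ereal (norm (F x)))"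
proof (cases "(\<lambda>x. ereal (norm (F x))) \<in> borel_measurable lborel")
  case True
  have "esssup lborel (\<lambda>x::'a. 0) \<le> esssup lborel (\<lambda>x. ereal (norm (F x)))"
    by (rule esssup_mono) simp_all
  moreover have "esssup lborel (\<lambda>x::'a. 0::ereal) = 0"
    by (rule esssup_const) simp
  ultimately show ?thesis by simp
qed (simp add: esssup_non_measurable)

lemma Lp_norm_nonneg: "0 \<le> Lp_norm p (F :: 'a::euclidean_space \<Rightarrow> complex)"
  unfolding Lp_norm_def using esssup_norm_nonneg[of F]
  by (auto simp: real_of_ereal_pos)

lemma memLp_Lp_norm_mono:
  fixes F G :: "'a::euclidean_space \<Rightarrow> complex"
  assumes p: "p > 0" and G: "memLp p G" and F: "F \<in> borel_measurable lborel"
    and le: "\<And>x. norm (F x) \<le> norm (G x)"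
  shows "memLp p F \<and> Lp_norm p F \<le> Lp_norm p G"
proof (cases "p = \<infinity>")
  case True
  have "esssup lborel (\<lambda>x. ereal (norm (F x))) \<le> esssup lborel (\<lambda>x. ereal (norm (G x)))"
    using F by (intro esssup_mono) (simp_all add: le)
  moreover have "esssup lborel (\<lambda>x. ereal (norm (G x))) < \<infinity>" using G True by (simp add: memLp_def)
  ultimately show ?thesis using True F esssup_norm_nonneg[of F]
    by (auto simp: memLp_def Lp_norm_def intro!: real_of_ereal_positive_mono)
next
  case False
  define q where "q = enn2real p"
  have q: "q > 0" using enn2real_gt_0[OF p False] q_def by simp
  have I: "(\<integral>\<^sup>+ x. ennreal (norm (F x) powr q) \<partial>lborel) \<le> (\<integral>\<^sup>+ x. ennreal (norm (G x) powr q) \<partial>lborel)"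
    using q le by (intro nn_integral_mono) (simp add: powr_mono2)
  have G_fin: "(\<integral>\<^sup>+ x. ennreal (norm (G x) powr q) \<partial>lborel) < \<infinity>"
    using G False q_def by (simp add: memLp_def)
  have "enn2real (\<integral>\<^sup>+ x. ennreal (norm (F x) powr q) \<partial>lborel)
      \<le> enn2real (\<integral>\<^sup>+ x. ennreal (norm (G x) powr q) \<partial>lborel)"
    using I G_fin by (intro enn2real_mono) auto
  then have "enn2real (\<integral>\<^sup>+ x. ennreal (norm (F x) powr q) \<partial>lborel) powr (1/q)
      \<le> enn2real (\<integral>\<^sup>+ x. ennreal (norm (G x) powr q) \<partial>lborel) powr (1/q)"
    using q by (intro powr_mono2) auto
  then show ?thesis using False F I G_fin q_def by (auto simp: memLp_def Lp_norm_def)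
qed

lemma powr_norm_diff_le:
  fixes x y :: "'a::real_normed_vector"
  assumes q: "q > 0"
  shows "norm (x - y) powr q \<le> 2 powr q * (norm x powr q + norm y powr q)"
proof -
  have "norm (x - y) \<le> 2 * max (norm x) (norm y)"
    using norm_triangle_ineq4[of x y] by linarith
  then have "norm (x - y) powr q \<le> (2 * max (norm x) (norm y)) powr q"
    using q by (intro powr_mono2) auto
  also have "\<dots> = 2 powr q * max (norm x) (norm y) powr q"
    by (simp add: powr_mult)
  also have "max (norm x) (norm y) powr q \<le> norm x powr q + norm y powr q"
    by (cases "norm x \<le> norm y") (auto simp: max_def)
  finally show ?thesis by simp
qed

lemma memLp_diff:
  fixes F G :: "'a::euclidean_space \<Rightarrow> complex"
  assumes p: "p > 0" and F: "memLp p F" and G: "memLp p G"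
  shows "memLp p (\<lambda>x. F x - G x)"
proof -
  have [measurable]: "F \<in> borel_measurable lborel" "G \<in> borel_measurable lborel"
    using F G by (auto simp: memLp_def)
  show ?thesis
  proof (cases "p = \<infinity>")
    case True
    have "esssup lborel (\<lambda>x. ereal (norm (F x - G x)))
        \<le> esssup lborel (\<lambda>x. ereal (norm (F x)) + ereal (norm (G x)))"
      by (rule esssup_mono) (auto simp: norm_triangle_ineq4)
    also have "\<dots> \<le> esssup lborel (\<lambda>x. ereal (norm (F x))) + esssup lborel (\<lambda>x. ereal (norm (G x)))"
      by (rule esssup_add)
    also have "\<dots> < \<infinity>" using F G True by (simp add: memLp_def)
    finally show ?thesis using True by (simp add: memLp_def)
  next
    case False
    define q where "q = enn2real p"
    have q: "q > 0" using enn2real_gt_0[OF p False] q_def by simp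
    have "(\<integral>\<^sup>+ x. ennreal (norm (F x - G x) powr q) \<partial>lborel)
        \<le> (\<integral>\<^sup>+ x. ennreal (2 powr q) * (ennreal (norm (F x) powr q) + ennreal (norm (G x) powr q)) \<partial>lborel)"
      by (intro nn_integral_mono)
        (simp add: powr_norm_diff_le[OF q] ennreal_mult[symmetric] ennreal_plus[symmetric] del: ennreal_plus)
    also have "\<dots> = ennreal (2 powr q) * ((\<integral>\<^sup>+ x. ennreal (norm (F x) powr q) \<partial>lborel)
        + (\<integral>\<^sup>+ x. ennreal (norm (G x) powr q) \<partial>lborel))"
      by (simp add: nn_integral_cmult nn_integral_add)
    also have "\<dots> < \<infinity>"
      using F G False q_def by (simp add: memLp_def ennreal_mult_less_top)
    finally show ?thesis using False q_def by (simp add: memLp_def)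
  qed
qed

lemma Lp_norm_cmult:
  fixes F :: "'a::euclidean_space \<Rightarrow> complex"
  assumes p: "p > 0" and c: "c > 0" and F[measurable]: "F \<in> borel_measurable lborel"
  shows "memLp p (\<lambda>x. complex_of_real c * F x) \<longleftrightarrow> memLp p F"
    and "Lp_norm p (\<lambda>x. complex_of_real c * F x) = c * Lp_norm p F"
proof -
  have E: "esssup lborel (\<lambda>x. ereal (norm (complex_of_real c * F x)))
      = ereal c * esssup lborel (\<lambda>x. ereal (norm (F x)))"
    using esssup_cmult[OF c, of lborel "\<lambda>x. ereal (norm (F x))"] c by (simp add: norm_mult)
  have I: "(\<integral>\<^sup>+ x. ennreal (norm (complex_of_real c * F x) powr q) \<partial>lborel)
      = ennreal (c powr q) * (\<integral>\<^sup>+ x. ennreal (norm (F x) powr q) \<partial>lborel)" for q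
    using c by (simp add: norm_mult powr_mult ennreal_mult nn_integral_cmult)
  show "memLp p (\<lambda>x. complex_of_real c * F x) \<longleftrightarrow> memLp p F"
    using c esssup_norm_nonneg[of F] unfolding memLp_def E I
    by (cases "esssup lborel (\<lambda>x. ereal (norm (F x)))") (auto simp: ennreal_mult_less_top)
  show "Lp_norm p (\<lambda>x. complex_of_real c * F x) = c * Lp_norm p F"
  proof (cases "p = \<infinity>")
    case False
    define q where "q = enn2real p"
    have q: "q > 0" using enn2real_gt_0[OF p False] q_def by simp
    show ?thesis
      using False c q unfolding Lp_norm_def I q_def[symmetric]
      by (simp add: enn2real_mult powr_mult powr_powr)
  qed (simp add: Lp_norm_def E)
qed

lemma esssup_ge_on_ball:
  fixes F :: "'a::euclidean_space \<Rightarrow> 'b::real_normed_vector"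
  assumes r: "r > 0" and lb: "\<And>x. x \<in> ball a r \<Longrightarrow> d \<le> norm (F x)"
  shows "ereal d \<le> esssup lborel (\<lambda>x. ereal (norm (F x)))"
proof (rule ccontr)
  assume "\<not> ?thesis"
  then have lt: "esssup lborel (\<lambda>x. ereal (norm (F x))) < ereal d" by simp
  have "AE x in lborel. x \<notin> ball a r"
    using esssup_AE[of "\<lambda>x. ereal (norm (F x))" lborel]
  proof (rule eventually_mono)
    fix x assume "ereal (norm (F x)) \<le> esssup lborel (\<lambda>x. ereal (norm (F x)))"
    with lt have "norm (F x) < d" by (metis ereal_less(2) le_less_trans less_ereal.simps(1))
    then show "x \<notin> ball a r" using lb by force
  qed
  then obtain N where N: "{x \<in> space lborel. \<not> x \<notin> ball a r} \<subseteq> N" "emeasure lborel N = 0"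
      "N \<in> sets lborel"
    by (rule AE_E)
  have "emeasure lborel (ball a r) \<le> emeasure lborel N"
    using N by (intro emeasure_mono) auto
  moreover have "emeasure lborel (ball a r) \<noteq> 0"
    using content_ball_pos[OF r, of a] by (metis measure_def enn2real_0 less_irrefl)
  ultimately show False using N by auto
qed

lemma Lp_norm_ge_on_ball:
  fixes a :: "'a::euclidean_space"
  assumes p: "p > 0" and r: "r > 0"
  obtains \<kappa> where "\<kappa> > 0"
    and "\<And>F d. memLp p F \<Longrightarrow> 0 \<le> d \<Longrightarrow> (\<And>x. x \<in> ball a r \<Longrightarrow> d \<le> norm (F x))
      \<Longrightarrow> d * \<kappa> \<le> Lp_norm p F"
proof (cases "p = \<infinity>")
  case True
  have "d \<le> Lp_norm p F"
    if F: "memLp p F" and lb: "\<And>x. x \<in> ball a r \<Longrightarrow> d \<le> norm (F x)" for F :: "'a \<Rightarrow> complex" and d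
    using esssup_ge_on_ball[where F = F and a = a and d = d, OF r lb] F True
    by (cases "esssup lborel (\<lambda>x. ereal (norm (F x)))") (auto simp: memLp_def Lp_norm_def)
  then show ?thesis by (intro that[of 1]) auto
next
  case False
  define q where "q = enn2real p"
  have q: "q > 0" using enn2real_gt_0[OF p False] q_def by simp
  have em: "emeasure lborel (ball a r) = ennreal (measure lborel (ball a r))"
    using emeasure_lborel_ball_finite[of a r] by (intro emeasure_eq_ennreal_measure) auto
  have "d * measure lborel (ball a r) powr (1/q) \<le> Lp_norm p F"
    if F: "memLp p F" and d: "0 \<le> d" and lb: "\<And>x. x \<in> ball a r \<Longrightarrow> d \<le> norm (F x)"
    for F :: "'a \<Rightarrow> complex" and d
  proof -
    have fin: "(\<integral>\<^sup>+ x. ennreal (norm (F x) powr q) \<partial>lborel) < \<infinity>"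
      using F False q_def by (simp add: memLp_def)
    have "ennreal (d powr q) * emeasure lborel (ball a r)
        = (\<integral>\<^sup>+ x. ennreal (d powr q) * indicator (ball a r) x \<partial>lborel)"
      by (simp add: nn_integral_cmult_indicator)
    also have "\<dots> \<le> (\<integral>\<^sup>+ x. ennreal (norm (F x) powr q) \<partial>lborel)"
      using lb d q by (intro nn_integral_mono) (auto simp: powr_mono2 split: split_indicator)
    finally have "d powr q * measure lborel (ball a r)
        \<le> enn2real (\<integral>\<^sup>+ x. ennreal (norm (F x) powr q) \<partial>lborel)"
      using fin em enn2real_mono by (fastforce simp: enn2real_mult)
    then have "(d powr q * measure lborel (ball a r)) powr (1/q)
        \<le> enn2real (\<integral>\<^sup>+ x. ennreal (norm (F x) powr q) \<partial>lborel) powr (1/q)"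
      using q d by (intro powr_mono2) auto
    moreover have "(d powr q * measure lborel (ball a r)) powr (1/q)
        = d * measure lborel (ball a r) powr (1/q)"
      using q d by (simp add: powr_mult powr_powr)
    ultimately show ?thesis using False q_def by (simp add: Lp_norm_def)
  qed
  moreover have "measure lborel (ball a r) powr (1/q) > 0"
    using content_ball_pos[OF r, of a] by simp
  ultimately show ?thesis by (intro that) auto
qed

section \<open>Invariance of Lebesgue measure under shears\<close>

lemma nn_integral_lborel_translate:
  fixes g :: "'a::euclidean_space \<Rightarrow> ennreal"
  assumes [measurable]: "g \<in> borel_measurable borel"
  shows "(\<integral>\<^sup>+ x. g (x + c) \<partial>lborel) = (\<integral>\<^sup>+ x. g x \<partial>lborel)"
proof -
  have "(\<integral>\<^sup>+ x. g x \<partial>lborel) = integral\<^sup>N (distr lborel borel ((+) c)) g"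
    by (simp add: lborel_distr_plus)
  also have "\<dots> = (\<integral>\<^sup>+ x. g (c + x) \<partial>lborel)"
    by (rule nn_integral_distr) auto
  finally show ?thesis by (simp add: add.commute)
qed

lemma nn_integral_lborel_shear:
  fixes H :: "('a::euclidean_space \<times> 'b::euclidean_space) \<Rightarrow> ennreal" and L :: "'a \<Rightarrow> 'b"
  assumes H[measurable]: "H \<in> borel_measurable borel" and L: "continuous_on UNIV L"
  shows "(\<integral>\<^sup>+ y. H (fst y + w, snd y + L (fst y)) \<partial>lborel) = (\<integral>\<^sup>+ y. H y \<partial>lborel)"
proof -
  have Sc: "(\<lambda>y::'a\<times>'b. (fst y + w, snd y + L (fst y))) \<in> borel_measurable borel"
    by (intro borel_measurable_continuous_onI continuous_intros continuous_on_compose2[OF L]) auto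
  have m1: "(\<lambda>y. H (fst y + w, snd y + L (fst y))) \<in> borel_measurable (lborel \<Otimes>\<^sub>M lborel)"
    unfolding lborel_prod using measurable_compose[OF Sc H] by simp
  have m2: "H \<in> borel_measurable (lborel \<Otimes>\<^sub>M lborel)"
    unfolding lborel_prod by measurable
  have "(\<integral>\<^sup>+ y. H (fst y + w, snd y + L (fst y)) \<partial>lborel)
     = (\<integral>\<^sup>+ y. H (fst y + w, snd y + L (fst y)) \<partial>(lborel \<Otimes>\<^sub>M lborel))"
    by (simp only: lborel_prod)
  also have "\<dots> = (\<integral>\<^sup>+ a. \<integral>\<^sup>+ b. H (a + w, b + L a) \<partial>lborel \<partial>lborel)"
    using lborel.nn_integral_fst[OF m1] by simp
  also have "\<dots> = (\<integral>\<^sup>+ a. \<integral>\<^sup>+ b. H (a + w, b) \<partial>lborel \<partial>lborel)"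
  proof (rule nn_integral_cong)
    fix a show "(\<integral>\<^sup>+ b. H (a + w, b + L a) \<partial>lborel) = (\<integral>\<^sup>+ b. H (a + w, b) \<partial>lborel)"
    proof (rule nn_integral_lborel_translate[of "\<lambda>b. H (a + w, b)"])
      have "(\<lambda>b::'b. (a + w, b)) \<in> borel_measurable borel"
        by (intro borel_measurable_continuous_onI continuous_intros)
      then show "(\<lambda>b. H (a + w, b)) \<in> borel_measurable borel" using measurable_compose[OF _ H] by blast
    qed
  qed
  also have "\<dots> = (\<integral>\<^sup>+ a. \<integral>\<^sup>+ b. H (a, b) \<partial>lborel \<partial>lborel)"
  proof (rule nn_integral_lborel_translate[of "\<lambda>a. \<integral>\<^sup>+ b. H (a, b) \<partial>lborel"])
    show "(\<lambda>a. \<integral>\<^sup>+ b. H (a, b) \<partial>lborel) \<in> borel_measurable borel"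
      using lborel.borel_measurable_nn_integral_fst[OF m2] by simp
  qed
  also have "\<dots> = (\<integral>\<^sup>+ y. H y \<partial>(lborel \<Otimes>\<^sub>M lborel))"
    using lborel.nn_integral_fst[OF m2] by simp
  also have "\<dots> = (\<integral>\<^sup>+ y. H y \<partial>lborel)"
    by (simp only: lborel_prod)
  finally show ?thesis .
qed

lemma emeasure_lborel_shear:
  fixes L :: "'a::euclidean_space \<Rightarrow> 'b::euclidean_space"
  assumes A: "A \<in> sets borel" and L: "continuous_on UNIV L"
  shows "emeasure lborel {y. (fst y + w, snd y + L (fst y)) \<in> A} = emeasure lborel A"
proof -
  have "emeasure lborel {y. (fst y + w, snd y + L (fst y)) \<in> A}
      = (\<integral>\<^sup>+ y. indicator A (fst y + w, snd y + L (fst y)) \<partial>lborel)"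
  proof -
    have Sc: "(\<lambda>y::'a\<times>'b. (fst y + w, snd y + L (fst y))) \<in> borel_measurable borel"
      by (intro borel_measurable_continuous_onI continuous_intros continuous_on_compose2[OF L]) auto
    have "{y. (fst y + w, snd y + L (fst y)) \<in> A} \<in> sets lborel"
      using measurable_sets[OF Sc A] by (simp add: vimage_def)
    then have "emeasure lborel {y. (fst y + w, snd y + L (fst y)) \<in> A} = (\<integral>\<^sup>+ y. indicator {y. (fst y + w, snd y + L (fst y)) \<in> A} y \<partial>lborel)"
      by (intro nn_integral_indicator[symmetric]) simp
    also have "\<dots> = (\<integral>\<^sup>+ y. indicator A (fst y + w, snd y + L (fst y)) \<partial>lborel)"
      by (intro nn_integral_cong) (auto split: split_indicator)
    finally show ?thesis .
  qed
  also have "\<dots> = (\<integral>\<^sup>+ y. indicator A y \<partial>lborel)"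
    by (rule nn_integral_lborel_shear) (use A L in auto)
  also have "\<dots> = emeasure lborel A" using A by simp
  finally show ?thesis .
qed

lemma memLp_Lp_norm_shear:
  fixes F :: "('a::euclidean_space \<times> 'b::euclidean_space) \<Rightarrow> complex" and L :: "'a \<Rightarrow> 'b"
  assumes F[measurable]: "F \<in> borel_measurable borel" and L: "continuous_on UNIV L"
  shows "memLp p (\<lambda>y. F (fst y + w, snd y + L (fst y))) = memLp p F"
    and "Lp_norm p (\<lambda>y. F (fst y + w, snd y + L (fst y))) = Lp_norm p F"
proof -
  define S where "S = (\<lambda>y::'a\<times>'b. (fst y + w, snd y + L (fst y)))"
  have Sm[measurable]: "S \<in> borel_measurable borel" unfolding S_def
    by (intro borel_measurable_continuous_onI continuous_intros continuous_on_compose2[OF L]) auto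
  have I: "(\<integral>\<^sup>+ y. ennreal (norm (F (S y)) powr q) \<partial>lborel) = (\<integral>\<^sup>+ y. ennreal (norm (F y) powr q) \<partial>lborel)" for q
    unfolding S_def by (rule nn_integral_lborel_shear[of "\<lambda>y. ennreal (norm (F y) powr q)"]) (use L in measurable)
  have E: "esssup lborel (\<lambda>y. ereal (norm (F (S y)))) = esssup lborel (\<lambda>y. ereal (norm (F y)))"
  proof -
    have e: "emeasure lborel {y \<in> space lborel. ereal (norm (F (S y))) > z} = emeasure lborel {y \<in> space lborel. ereal (norm (F y)) > z}" for z
    proof -
      have A: "{y. ereal (norm (F y)) > z} \<in> sets borel" by measurable
      show ?thesis using emeasure_lborel_shear[OF A L, of w] unfolding S_def by simp
    qed
    have m1: "(\<lambda>y. ereal (norm (F (S y)))) \<in> borel_measurable lborel" by measurable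
    have m2: "(\<lambda>y. ereal (norm (F y))) \<in> borel_measurable lborel" by measurable
    show ?thesis unfolding esssup_eq[OF m1] esssup_eq[OF m2] e ..
  qed
  have M: "(\<lambda>y. F (S y)) \<in> borel_measurable lborel" by measurable
  show "memLp p (\<lambda>y. F (fst y + w, snd y + L (fst y))) = memLp p F"
    using I E M unfolding S_def memLp_def by simp
  show "Lp_norm p (\<lambda>y. F (fst y + w, snd y + L (fst y))) = Lp_norm p F"
    using I E unfolding S_def Lp_norm_def by simp
qed


section \<open>Entire functions\<close>

lemma entire_fun_const: "entire_fun (\<lambda>y. c)"
  unfolding entire_fun_def by (auto intro!: exI[of _ "\<lambda>_. 0"])

lemma entire_fun_mult:
  assumes f: "entire_fun f" and g: "entire_fun g"
  shows "entire_fun (\<lambda>y. f y * g y)"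
  unfolding entire_fun_def
proof
  fix x
  obtain Lf where Lf: "(f has_derivative Lf) (at x)" "\<And>c v. Lf (c *s fst v, c *s snd v) = c * Lf v"
    using f unfolding entire_fun_def by blast
  obtain Lg where Lg: "(g has_derivative Lg) (at x)" "\<And>c v. Lg (c *s fst v, c *s snd v) = c * Lg v"
    using g unfolding entire_fun_def by blast
  show "\<exists>L. ((\<lambda>y. f y * g y) has_derivative L) (at x) \<and> (\<forall>c v. L (c *s fst v, c *s snd v) = c * L v)"
    by (rule exI[of _ "\<lambda>h. f x * Lg h + Lf h * g x"], rule conjI, rule has_derivative_mult[OF Lf(1) Lg(1)])
       (simp add: Lf(2) Lg(2) algebra_simps)
qed

lemma entire_fun_cmult: "entire_fun f \<Longrightarrow> entire_fun (\<lambda>y. c * f y)"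
  by (rule entire_fun_mult[OF entire_fun_const])

lemma entire_fun_affine_comp:
  assumes f: "entire_fun f" and M: "bounded_linear M"
    and M_smult: "\<And>c v. M (c *s fst v, c *s snd v) = (c *s fst (M v), c *s snd (M v))"
  shows "entire_fun (\<lambda>y. f (a + M y))"
  unfolding entire_fun_def
proof
  fix x
  obtain L where L: "(f has_derivative L) (at (a + M x))" "\<And>c v. L (c *s fst v, c *s snd v) = c * L v"
    using f unfolding entire_fun_def by blast
  have "((\<lambda>y. a + M y) has_derivative (\<lambda>h. 0 + M h)) (at x)"
    by (intro has_derivative_add has_derivative_const bounded_linear_imp_has_derivative[OF M])
  from has_derivative_compose[OF this L(1)]
  have "((\<lambda>y. f (a + M y)) has_derivative (\<lambda>h. L (M h))) (at x)" by simp
  moreover have "L (M (c *s fst v, c *s snd v)) = c * L (M v)" for c v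
    using L(2)[of c "M v"] by (simp add: M_smult)
  ultimately show "\<exists>L. ((\<lambda>y. f (a + M y)) has_derivative L) (at x) \<and> (\<forall>c v. L (c *s fst v, c *s snd v) = c * L v)"
    by blast
qed

lemma entire_fun_exp_lamC:
  fixes l :: "real^'m"
  shows "entire_fun (\<lambda>y::(complex^'n) \<times> (complex^'m). exp (\<i> * lamC l (snd y)))"
  unfolding entire_fun_def
proof
  fix x :: "(complex^'n) \<times> (complex^'m)"
  have bl: "bounded_linear (\<lambda>y::(complex^'n) \<times> (complex^'m). \<i> * lamC l (snd y))"
    by (intro bounded_linear_intros bounded_linear_lamC)
  have "(exp has_derivative (\<lambda>h. exp (\<i> * lamC l (snd x)) * h)) (at (\<i> * lamC l (snd x)))"
    using DERIV_exp[of "\<i> * lamC l (snd x)"] by (simp add: has_field_derivative_def)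
  from has_derivative_compose[OF bounded_linear_imp_has_derivative[OF bl] this]
  have "((\<lambda>y. exp (\<i> * lamC l (snd y))) has_derivative
      (\<lambda>h. exp (\<i> * lamC l (snd x)) * (\<i> * lamC l (snd h)))) (at x)" by simp
  then show "\<exists>L. ((\<lambda>y. exp (\<i> * lamC l (snd y))) has_derivative L) (at x) \<and> (\<forall>c v. L (c *s fst v, c *s snd v) = c * L v)"
    by (intro exI[of _ "\<lambda>h. exp (\<i> * lamC l (snd x)) * (\<i> * lamC l (snd h))"]) (auto simp: lamC_smult)
qed

lemma entire_fun_mult_exp: "entire_fun f \<Longrightarrow> entire_fun (mult_exp l f)"
  unfolding mult_exp_apply[abs_def] by (intro entire_fun_mult entire_fun_exp_lamC)

lemma entire_fun_continuous: "entire_fun f \<Longrightarrow> continuous_on S f"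
  unfolding entire_fun_def
  by (intro continuous_at_imp_continuous_on ballI) (meson has_derivative_continuous)

lemma entire_fun_holomorphic_on_line:
  assumes "entire_fun f"
  shows "(\<lambda>u. f (a + (u *s fst d, u *s snd d))) holomorphic_on S"
  unfolding holomorphic_on_def field_differentiable_def
proof
  fix u :: complex
  obtain L where L: "(f has_derivative L) (at (a + (u *s fst d, u *s snd d)))"
      "\<And>c v. L (c *s fst v, c *s snd v) = c * L v"
    using assms unfolding entire_fun_def by blast
  have smult_left: "bounded_linear (\<lambda>h::complex. h *s v)" for v :: "complex^'k"
    unfolding linear_conv_bounded_linear[symmetric]
    by (rule linearI) (simp_all add: vec_eq_iff algebra_simps scaleR_vec_eq_smult scaleR_conv_of_real)
  have "((\<lambda>u. a + (u *s fst d, u *s snd d)) has_derivative (\<lambda>h. 0 + (h *s fst d, h *s snd d))) (at u)"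
    by (intro has_derivative_add has_derivative_const has_derivative_Pair
        bounded_linear_imp_has_derivative smult_left)
  from has_derivative_compose[OF this L(1)]
  have "((\<lambda>u. f (a + (u *s fst d, u *s snd d))) has_derivative (\<lambda>h. L (h *s fst d, h *s snd d))) (at u)"
    by simp
  moreover have "(\<lambda>h. L (h *s fst d, h *s snd d)) = (*) (L d)"
    by (auto simp: L(2) mult.commute)
  ultimately have "((\<lambda>u. f (a + (u *s fst d, u *s snd d))) has_field_derivative L d) (at u)"
    by (simp add: has_field_derivative_def)
  then show "\<exists>f'. ((\<lambda>u. f (a + (u *s fst d, u *s snd d))) has_field_derivative f') (at u within S)"
    by (blast intro: has_field_derivative_at_within)
qed

text \<open>The real points of the complex line \<open>u \<mapsto> (\<zeta>, Re z + i \<Phi>(\<zeta>) + u (Im z - \<Phi>(\<zeta>)))\<close> lie on the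
  slice \<open>Im z = \<Phi>(\<zeta>)\<close> where \<open>f\<^sub>0\<close> lives, and \<open>u = i\<close> gives \<open>(\<zeta>, z)\<close>.\<close>
lemma entire_fun_eq_0_if_f0_eq_0:
  fixes f :: "(complex^'n) \<times> (complex^'m) \<Rightarrow> complex"
    and Phi :: "complex^'n \<Rightarrow> complex^'n \<Rightarrow> complex^'m"
  assumes f: "entire_fun f" and f0: "\<And>y. f0 Phi f y = 0"
  shows "f = (\<lambda>_. 0)"
proof
  fix y :: "(complex^'n) \<times> (complex^'m)"
  obtain \<zeta> z where y: "y = (\<zeta>, z)" by fastforce
  define a where "a = (\<zeta>, ofF (ReF z) + \<i> *s ofF (PhiF Phi \<zeta>))"
  define d where "d = (0 :: complex^'n, ofF (ImF z - PhiF Phi \<zeta>))"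
  define g where "g = (\<lambda>u. f (a + (u *s fst d, u *s snd d)))"
  have g_real: "g u = 0" if "u \<in> \<real>" for u
  proof -
    from that obtain r where r: "u = complex_of_real r" by (rule Reals_cases)
    have "a + (u *s fst d, u *s snd d)
        = (\<zeta>, ofF (ReF z + r *\<^sub>R (ImF z - PhiF Phi \<zeta>)) + \<i> *s ofF (PhiF Phi \<zeta>))"
      by (simp add: a_def d_def r vec_eq_iff complex_eq_iff)
    then have "g u = f0 Phi f (\<zeta>, ReF z + r *\<^sub>R (ImF z - PhiF Phi \<zeta>))"
      unfolding g_def f0_apply by simp
    then show ?thesis using f0 by simp
  qed
  have limpt: "(0::complex) islimpt \<real>"
    unfolding islimpt_approachable
  proof (intro allI impI)
    fix e :: real assume "0 < e"
    then show "\<exists>x::complex\<in>\<real>. x \<noteq> 0 \<and> dist x 0 < e"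
      by (auto intro!: bexI[where x="complex_of_real (e/2)"] simp: dist_norm)
  qed
  have "g holomorphic_on UNIV"
    unfolding g_def by (rule entire_fun_holomorphic_on_line[OF f])
  then have "g \<i> = 0"
    by (rule analytic_continuation[OF _ open_UNIV connected_UNIV _ _ limpt g_real]) auto
  moreover have "a + (\<i> *s fst d, \<i> *s snd d) = y"
    by (simp add: y a_def d_def vec_eq_iff complex_eq_iff)
  ultimately show "f y = 0" by (simp add: g_def)
qed

section \<open>The growth class\<close>

lemma exp_ereal_nonneg: "0 \<le> exp_ereal x"
  by (cases x) (auto simp: exp_ereal_def)

lemma exp_ereal_add_ereal: "exp_ereal (X + ereal a) = exp_ereal X * ereal (exp a)"
  by (cases X) (auto simp: exp_ereal_def exp_add)

lemma HK_translate: "HK ((\<lambda>k. k + l) ` A) h = HK A h + ereal (- (l \<bullet> h))"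
proof (cases "A = {}")
  case True
  then show ?thesis by (simp add: HK_def bot_ereal_def)
next
  case False
  have "HK ((\<lambda>k. k + l) ` A) h = (SUP k\<in>A. ereal ((- k) \<bullet> h) + ereal (- (l \<bullet> h)))"
    unfolding HK_def image_image by (intro SUP_cong) (auto simp: inner_diff_left)
  also have "\<dots> = (SUP k\<in>A. ereal ((- k) \<bullet> h)) + ereal (- (l \<bullet> h))"
    by (rule SUP_ereal_add_left) (use False in auto)
  finally show ?thesis by (simp add: HK_def image_image)
qed

lemma msum_ball_translate: "msum_ball ((\<lambda>k. k + l) ` K) e = (\<lambda>k. k + l) ` msum_ball K e"
  unfolding msum_ball_def by (auto simp: image_iff) (metis add.assoc add.commute)+

lemma exp_growth_mono:
  fixes X C C' :: real
  assumes "0 \<le> X" "0 \<le> C" "C \<le> C'"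
  shows "C * exp (C * X) \<le> C' * exp (C' * X)"
  using assms by (intro mult_mono) (auto intro: mult_right_mono)

lemma ereal_le_mult_right_mono:
  "ereal a \<le> ereal b * Y \<Longrightarrow> b \<le> b' \<Longrightarrow> 0 \<le> Y \<Longrightarrow> ereal a \<le> ereal b' * Y"
  by (meson ereal_less_eq(3) ereal_mult_right_mono order_trans)

lemma ereal_le_mult_cmult:
  assumes "ereal a \<le> ereal b * Y" "0 \<le> c"
  shows "ereal (c * a) \<le> ereal (c * b) * Y"
proof -
  have "ereal c * ereal a \<le> ereal c * (ereal b * Y)"
    using assms by (intro ereal_mult_left_mono) auto
  then show ?thesis by (metis mult.assoc times_ereal.simps(1))
qed

lemma Etilde_growth_bound:
  assumes "f \<in> Etilde Phi K" "e > 0"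
  obtains C where "C \<ge> 1" "\<And>\<zeta> z. ereal (norm (f (\<zeta>, z)))
    \<le> ereal (C * exp (C * ((norm \<zeta>)\<^sup>2 + norm (ReF z)))) * exp_ereal (HK (msum_ball K e) (rho Phi \<zeta> z))"
proof -
  obtain C where C: "\<And>\<zeta> z. ereal (norm (f (\<zeta>, z)))
    \<le> ereal (C * exp (C * ((norm \<zeta>)\<^sup>2 + norm (ReF z)))) * exp_ereal (HK (msum_ball K e) (rho Phi \<zeta> z))"
    using assms unfolding Etilde_def by blast
  have "ereal (norm (f (\<zeta>, z)))
    \<le> ereal (max C 1 * exp (max C 1 * ((norm \<zeta>)\<^sup>2 + norm (ReF z)))) * exp_ereal (HK (msum_ball K e) (rho Phi \<zeta> z))"
    for \<zeta> z
  proof (rule ereal_le_mult_right_mono[OF C _ exp_ereal_nonneg])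
    show "C * exp (C * ((norm \<zeta>)\<^sup>2 + norm (ReF z))) \<le> max C 1 * exp (max C 1 * ((norm \<zeta>)\<^sup>2 + norm (ReF z)))"
    proof (cases "C \<le> 0")
      case True
      then have "C * exp (C * ((norm \<zeta>)\<^sup>2 + norm (ReF z))) \<le> 0"
        by (simp add: mult_nonpos_nonneg)
      then show ?thesis by (smt (verit) exp_gt_zero max.cobounded2 mult_nonneg_nonneg)
    qed (auto intro: exp_growth_mono)
  qed
  then show ?thesis by (intro that[of "max C 1"]) auto
qed

lemma exp_growth_absorb:
  fixes X C \<alpha> \<beta> B b m :: real
  assumes "0 \<le> X" "1 \<le> C" "0 \<le> \<alpha>" "0 \<le> B" "0 \<le> b"
  shows "B * exp (b * X - m) * (C * exp (C * (\<alpha> * X + \<beta>)))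
    \<le> (B * C * exp (C * \<beta>) + b + C * \<alpha>) * exp ((B * C * exp (C * \<beta>) + b + C * \<alpha>) * X) * exp (- m)"
proof -
  have "B * exp (b * X - m) * (C * exp (C * (\<alpha> * X + \<beta>)))
      = B * C * exp (C * \<beta>) * exp ((b + C * \<alpha>) * X) * exp (- m)"
    by (simp add: algebra_simps flip: exp_add)
  also have "\<dots> \<le> (B * C * exp (C * \<beta>) + b + C * \<alpha>) * exp ((B * C * exp (C * \<beta>) + b + C * \<alpha>) * X) * exp (- m)"
    using assms by (intro mult_right_mono mult_mono) (auto intro!: mult_right_mono)
  finally show ?thesis .
qed

lemma Etilde_dominated:
  fixes f g :: "(complex^'n) \<times> (complex^'m) \<Rightarrow> complex"
    and \<sigma> :: "(complex^'n) \<times> (complex^'m) \<Rightarrow> (complex^'n) \<times> (complex^'m)"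
  assumes f: "f \<in> Etilde Phi K" and g: "entire_fun g"
    and rho_\<sigma>: "\<And>y. rho Phi (fst (\<sigma> y)) (snd (\<sigma> y)) = rho Phi (fst y) (snd y)"
    and growth_\<sigma>: "\<And>y. (norm (fst (\<sigma> y)))\<^sup>2 + norm (ReF (snd (\<sigma> y)))
      \<le> \<alpha> * ((norm (fst y))\<^sup>2 + norm (ReF (snd y))) + \<beta>"
    and dom: "\<And>y. norm (g y)
      \<le> B * exp (b * ((norm (fst y))\<^sup>2 + norm (ReF (snd y))) - l \<bullet> rho Phi (fst y) (snd y)) * norm (f (\<sigma> y))"
    and "0 \<le> \<alpha>" "0 \<le> B" "0 \<le> b"
  shows "g \<in> Etilde Phi ((\<lambda>k. k + l) ` K)"
proof -
  have "\<exists>C. \<forall>\<zeta> z. ereal (norm (g (\<zeta>, z))) \<le> ereal (C * exp (C * ((norm \<zeta>)\<^sup>2 + norm (ReF z))))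
      * exp_ereal (HK (msum_ball ((\<lambda>k. k + l) ` K) e) (rho Phi \<zeta> z))"
    if "e > 0" for e
  proof -
    obtain C where C1: "C \<ge> 1" and C: "\<And>\<zeta> z. ereal (norm (f (\<zeta>, z)))
      \<le> ereal (C * exp (C * ((norm \<zeta>)\<^sup>2 + norm (ReF z)))) * exp_ereal (HK (msum_ball K e) (rho Phi \<zeta> z))"
      using Etilde_growth_bound[OF f \<open>e > 0\<close>] by blast
    define C' where "C' = B * C * exp (C * \<beta>) + b + C * \<alpha>"
    show ?thesis
    proof (intro exI allI)
      fix \<zeta> :: "complex^'n" and z :: "complex^'m"
      define X where "X = (norm \<zeta>)\<^sup>2 + norm (ReF z)"
      define \<rho> where "\<rho> = rho Phi \<zeta> z"
      define Y where "Y = exp_ereal (HK (msum_ball K e) \<rho>)"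
      have X: "0 \<le> X" and Y: "0 \<le> Y" by (simp_all add: X_def Y_def exp_ereal_nonneg)
      have "ereal (norm (f (\<sigma> (\<zeta>, z))))
          \<le> ereal (C * exp (C * ((norm (fst (\<sigma> (\<zeta>, z))))\<^sup>2 + norm (ReF (snd (\<sigma> (\<zeta>, z))))))) * Y"
        using C[of "fst (\<sigma> (\<zeta>, z))" "snd (\<sigma> (\<zeta>, z))"] by (simp add: rho_\<sigma> Y_def \<rho>_def)
      also have "\<dots> \<le> ereal (C * exp (C * (\<alpha> * X + \<beta>))) * Y"
      proof (rule ereal_mult_right_mono[OF _ Y], unfold ereal_less_eq)
        show "C * exp (C * ((norm (fst (\<sigma> (\<zeta>, z))))\<^sup>2 + norm (ReF (snd (\<sigma> (\<zeta>, z))))))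
            \<le> C * exp (C * (\<alpha> * X + \<beta>))"
          using growth_\<sigma>[of "(\<zeta>, z)"] C1 by (simp add: X_def)
      qed
      finally have f_bound: "ereal (norm (f (\<sigma> (\<zeta>, z)))) \<le> ereal (C * exp (C * (\<alpha> * X + \<beta>))) * Y" .
      have "ereal (norm (g (\<zeta>, z))) \<le> ereal (B * exp (b * X - l \<bullet> \<rho>) * norm (f (\<sigma> (\<zeta>, z))))"
        using dom[of "(\<zeta>, z)"] by (simp add: X_def \<rho>_def)
      also have "\<dots> \<le> ereal (B * exp (b * X - l \<bullet> \<rho>) * (C * exp (C * (\<alpha> * X + \<beta>)))) * Y"
        using ereal_le_mult_cmult[OF f_bound, of "B * exp (b * X - l \<bullet> \<rho>)"] \<open>0 \<le> B\<close> by simp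
      also have "\<dots> \<le> ereal (C' * exp (C' * X) * exp (- (l \<bullet> \<rho>))) * Y"
        unfolding C'_def using exp_growth_absorb[OF X C1 \<open>0 \<le> \<alpha>\<close> \<open>0 \<le> B\<close> \<open>0 \<le> b\<close>] Y
        by (intro ereal_mult_right_mono) auto
      also have "\<dots> = ereal (C' * exp (C' * X)) * exp_ereal (HK (msum_ball ((\<lambda>k. k + l) ` K) e) \<rho>)"
        by (simp add: Y_def msum_ball_translate HK_translate exp_ereal_add_ereal mult_ac)
      finally show "ereal (norm (g (\<zeta>, z))) \<le> ereal (C' * exp (C' * ((norm \<zeta>)\<^sup>2 + norm (ReF z))))
          * exp_ereal (HK (msum_ball ((\<lambda>k. k + l) ` K) e) (rho Phi \<zeta> z))"
        unfolding X_def \<rho>_def .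
    qed
  qed
  then show ?thesis using g unfolding Etilde_def by blast
qed

lemma Etilde_cmult:
  assumes f: "f \<in> Etilde Phi K"
  shows "(\<lambda>y. c * f y) \<in> Etilde Phi K"
proof -
  have "entire_fun f" using f by (simp add: Etilde_def)
  then have "(\<lambda>y. c * f y) \<in> Etilde Phi ((\<lambda>k. k + 0) ` K)"
    by (intro Etilde_dominated[OF f, where \<sigma> = id and \<alpha> = 1 and \<beta> = 0 and B = "norm c" and b = 0])
      (simp_all add: entire_fun_cmult norm_mult)
  then show ?thesis by simp
qed

lemma zero_in_Bspace:
  fixes Phi :: "complex^'n \<Rightarrow> complex^'n \<Rightarrow> complex^'m"
  assumes p: "p > 0"
  shows "(\<lambda>_. 0) \<in> Bspace Phi p K"
proof -
  have "(\<lambda>_. 0) \<in> Etilde Phi K"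
    unfolding Etilde_def
    by (auto simp: zero_ereal_def[symmetric] intro!: entire_fun_const exI[of _ 1] ereal_0_le_mult
        exp_ereal_nonneg)
  moreover have "memLp p (f0 Phi (\<lambda>_. 0))"
  proof (cases "p = \<infinity>")
    case True
    have "esssup lborel (\<lambda>x::(complex^'n)\<times>(real^'m). ereal 0) = 0"
      using esssup_const[of "lborel :: ((complex^'n)\<times>(real^'m)) measure" "ereal 0"] by (simp add: zero_ereal_def)
    then show ?thesis using True by (simp add: memLp_def f0_def split_beta)
  qed (use enn2real_gt_0[OF p] in \<open>simp add: memLp_def f0_def split_beta\<close>)
  ultimately show ?thesis by (simp add: Bspace_def)
qed

lemma f0_cmult: "f0 Phi (\<lambda>y. c * f y) = (\<lambda>y. c * f0 Phi f y)"
  by (simp add: f0_apply[abs_def])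

lemma f0_diff: "f0 Phi (f - g) = (\<lambda>y. f0 Phi f y - f0 Phi g y)"
  by (simp add: f0_apply[abs_def])

lemma Bspace_cmult:
  assumes p: "p > 0" and c: "c > 0" and f: "f \<in> Bspace Phi p K"
  shows "(\<lambda>y. complex_of_real c * f y) \<in> Bspace Phi p K"
    and "Bnorm Phi p (\<lambda>y. complex_of_real c * f y) = c * Bnorm Phi p f"
proof -
  have f0: "memLp p (f0 Phi f)" and f0_meas: "f0 Phi f \<in> borel_measurable lborel"
    using f by (auto simp: Bspace_def memLp_def)
  have "memLp p (\<lambda>y. complex_of_real c * f0 Phi f y)"
    using Lp_norm_cmult(1)[OF p c f0_meas] f0 by simp
  then show "(\<lambda>y. complex_of_real c * f y) \<in> Bspace Phi p K"
    using f Etilde_cmult by (auto simp: Bspace_def f0_cmult)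
  show "Bnorm Phi p (\<lambda>y. complex_of_real c * f y) = c * Bnorm Phi p f"
    unfolding Bnorm_def f0_cmult by (rule Lp_norm_cmult(2)[OF p c f0_meas])
qed

section \<open>Hermitian maps\<close>

locale hermitian_form =
  fixes Phi :: "complex^'n \<Rightarrow> complex^'n \<Rightarrow> complex^'m"
  assumes hermitian: "hermitian_map Phi"
begin

lemma Phi_add_left: "Phi (a + b) c = Phi a c + Phi b c"
  using hermitian unfolding hermitian_map_def by blast

lemma Phi_smult_left: "Phi (c *s a) b = c *s Phi a b"
  using hermitian unfolding hermitian_map_def by blast

lemma Phi_add_right: "Phi a (b + c) = Phi a b + Phi a c"
  using hermitian unfolding hermitian_map_def by blast

lemma Phi_smult_right: "Phi a (c *s b) = cnj c *s Phi a b"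
  using hermitian unfolding hermitian_map_def by blast

lemma Phi_commute_cnj: "Phi b a $ j = cnj (Phi a b $ j)"
  using hermitian unfolding hermitian_map_def by (metis vec_lambda_beta)

lemma Im_Phi_diag: "Im (Phi a a $ j) = 0"
  using Phi_commute_cnj[of a a j] by (simp add: complex_eq_iff)

lemma Phi_minus_right: "Phi a (- b) = - Phi a b"
  using Phi_smult_right[of a "-1" b] by (simp add: vec_eq_iff)

lemma Phi_scaleR_left: "Phi (r *\<^sub>R a) b = r *\<^sub>R Phi a b"
  by (simp add: scaleR_vec_eq_smult Phi_smult_left)

lemma bounded_bilinear_Phi: "bounded_bilinear Phi"
proof -
  have "bilinear Phi"
    unfolding bilinear_def
    by (auto intro!: linearI simp: Phi_add_left Phi_add_right Phi_smult_left Phi_smult_right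
        scaleR_vec_eq_smult)
  then show ?thesis by (rule bilinear_conv_bounded_bilinear[THEN iffD1])
qed

lemma Phi_bound: obtains C where "C > 0" "\<And>a b. norm (Phi a b) \<le> C * norm a * norm b"
proof -
  obtain C where "C > 0" "\<And>a b. norm (Phi a b) \<le> norm a * norm b * C"
    using bounded_bilinear.pos_bounded[OF bounded_bilinear_Phi] by blast
  then show ?thesis by (intro that[of C]) (auto simp: algebra_simps)
qed

lemma bounded_linear_ImF_Phi_left [bounded_linear]: "bounded_linear (\<lambda>\<zeta>. ImF (Phi \<zeta> w))"
  by (simp add: linear_conv_bounded_linear[symmetric] linearI vec_eq_iff Phi_add_left
      Phi_scaleR_left)

lemma continuous_on_PhiF [continuous_intros]:
  assumes "continuous_on S g"
  shows "continuous_on S (\<lambda>x. PhiF Phi (g x))"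
proof -
  have "PhiF Phi = (\<lambda>a. ReF (Phi a a))" by (simp add: fun_eq_iff vec_eq_iff)
  then show ?thesis
    using bounded_bilinear.continuous_on[OF bounded_bilinear_Phi assms assms]
    by (auto intro: bounded_linear.continuous_on[OF bounded_linear_ReF])
qed

lemma PhiF_add: "PhiF Phi (a + b) = PhiF Phi a + PhiF Phi b + 2 *\<^sub>R ReF (Phi a b)"
  using Phi_commute_cnj[of a b] by (simp add: vec_eq_iff Phi_add_left Phi_add_right)

lemma PhiF_scaleR: "PhiF Phi (complex_of_real t *s a) = t\<^sup>2 *\<^sub>R PhiF Phi a"
  by (simp add: vec_eq_iff Phi_smult_left Phi_smult_right power2_eq_square)

lemma PhiF_diff_smult:
  "PhiF Phi (\<zeta> - complex_of_real t *s \<zeta>\<^sub>0)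
    = PhiF Phi \<zeta> + t\<^sup>2 *\<^sub>R PhiF Phi \<zeta>\<^sub>0 - (2 * t) *\<^sub>R ReF (Phi \<zeta> \<zeta>\<^sub>0)"
proof -
  have eq: "\<zeta> - complex_of_real t *s \<zeta>\<^sub>0 = \<zeta> + complex_of_real (- t) *s \<zeta>\<^sub>0"
    by (simp add: vec_eq_iff)
  show ?thesis
    unfolding eq PhiF_add PhiF_scaleR by (simp add: Phi_smult_right Phi_minus_right vec_eq_iff)
qed

lemma inner_PhiF_diff_smult_ge:
  assumes Cp: "\<And>a b. norm (Phi a b) \<le> Cp * norm a * norm b" and "0 \<le> Cp"
    and \<zeta>: "norm \<zeta> \<le> R" and t: "0 \<le> t"
  shows "- (lam \<bullet> PhiF Phi \<zeta>\<^sub>0) * t\<^sup>2 - 2 * norm lam * Cp * R * norm \<zeta>\<^sub>0 * t - norm lam * Cp * R\<^sup>2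
    \<le> - (lam \<bullet> PhiF Phi (\<zeta> - complex_of_real t *s \<zeta>\<^sub>0))"
proof -
  have R: "0 \<le> R" using \<zeta> norm_ge_zero order_trans by blast
  have "lam \<bullet> PhiF Phi \<zeta> \<le> norm lam * norm (PhiF Phi \<zeta>)"
    using Cauchy_Schwarz_ineq2[of lam "PhiF Phi \<zeta>"] by linarith
  also have "\<dots> \<le> norm lam * (Cp * R * R)"
  proof (intro mult_left_mono norm_ge_zero)
    have "Cp * norm \<zeta> * norm \<zeta> \<le> Cp * R * R"
      using \<zeta> R \<open>0 \<le> Cp\<close> by (intro mult_mono mult_left_mono) auto
    then show "norm (PhiF Phi \<zeta>) \<le> Cp * R * R"
      using Cp[of \<zeta> \<zeta>] norm_PhiF_le[of Phi \<zeta>] by linarith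
  qed
  finally have b1: "lam \<bullet> PhiF Phi \<zeta> \<le> norm lam * Cp * R\<^sup>2"
    by (simp add: power2_eq_square mult_ac)
  have "- (lam \<bullet> ReF (Phi \<zeta> \<zeta>\<^sub>0)) \<le> norm lam * norm (ReF (Phi \<zeta> \<zeta>\<^sub>0))"
    using Cauchy_Schwarz_ineq2[of lam "ReF (Phi \<zeta> \<zeta>\<^sub>0)"] by linarith
  also have "\<dots> \<le> norm lam * (Cp * R * norm \<zeta>\<^sub>0)"
  proof (intro mult_left_mono norm_ge_zero)
    have "Cp * norm \<zeta> * norm \<zeta>\<^sub>0 \<le> Cp * R * norm \<zeta>\<^sub>0"
      using \<zeta> \<open>0 \<le> Cp\<close> by (intro mult_right_mono mult_left_mono) auto
    then show "norm (ReF (Phi \<zeta> \<zeta>\<^sub>0)) \<le> Cp * R * norm \<zeta>\<^sub>0"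
      using Cp[of \<zeta> \<zeta>\<^sub>0] norm_ReF_le[of "Phi \<zeta> \<zeta>\<^sub>0"] by linarith
  qed
  finally have "2 * t * (- (lam \<bullet> ReF (Phi \<zeta> \<zeta>\<^sub>0))) \<le> 2 * t * (norm lam * (Cp * R * norm \<zeta>\<^sub>0))"
    using t by (intro mult_left_mono) auto
  then have b2: "- (2 * norm lam * Cp * R * norm \<zeta>\<^sub>0 * t) \<le> 2 * t * (lam \<bullet> ReF (Phi \<zeta> \<zeta>\<^sub>0))"
    by (simp only: mult_ac mult_minus_right)
  have "- (lam \<bullet> PhiF Phi (\<zeta> - complex_of_real t *s \<zeta>\<^sub>0))
      = - (lam \<bullet> PhiF Phi \<zeta>) + - (lam \<bullet> PhiF Phi \<zeta>\<^sub>0) * t\<^sup>2 + 2 * t * (lam \<bullet> ReF (Phi \<zeta> \<zeta>\<^sub>0))"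
    by (simp add: PhiF_diff_smult inner_diff_right inner_add_right mult.commute)
  with b1 b2 show ?thesis by linarith
qed

lemma continuous_on_f0: "entire_fun f \<Longrightarrow> continuous_on S (f0 Phi f)"
  unfolding f0_apply[abs_def]
  by (intro continuous_on_compose2[OF entire_fun_continuous] continuous_intros) auto

end

section \<open>Multiplication by \<open>exp (i \<lambda>\<^sub>C)\<close>\<close>

context hermitian_form
begin

lemma Etilde_mult_exp:
  assumes f: "f \<in> Etilde Phi K"
  shows "mult_exp l f \<in> Etilde Phi ((\<lambda>k. k + l) ` K)"
proof -
  obtain Cp where Cp: "Cp > 0" "\<And>a b. norm (Phi a b) \<le> Cp * norm a * norm b"
    using Phi_bound by blast
  have "norm (mult_exp l f y)
      \<le> exp (norm l * Cp * ((norm (fst y))\<^sup>2 + norm (ReF (snd y))) - l \<bullet> rho Phi (fst y) (snd y)) * norm (f y)"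
    for y
  proof -
    have "- (l \<bullet> PhiF Phi (fst y)) \<le> norm l * norm (PhiF Phi (fst y))"
      using Cauchy_Schwarz_ineq2[of l "PhiF Phi (fst y)"] by linarith
    also have "\<dots> \<le> norm l * (Cp * (norm (fst y))\<^sup>2)"
      using norm_PhiF_le[of Phi "fst y"] Cp(2)[of "fst y" "fst y"]
      by (intro mult_left_mono) (auto simp: power2_eq_square mult_ac)
    also have "\<dots> \<le> norm l * Cp * ((norm (fst y))\<^sup>2 + norm (ReF (snd y)))"
      using Cp(1) by (simp add: algebra_simps)
    finally have "exp (- (l \<bullet> ImF (snd y)))
        \<le> exp (norm l * Cp * ((norm (fst y))\<^sup>2 + norm (ReF (snd y))) - l \<bullet> rho Phi (fst y) (snd y))"
      by (simp add: rho_def inner_diff_right)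
    then show ?thesis
      by (simp add: mult_exp_apply norm_mult Im_lamC mult_right_mono)
  qed
  moreover have "entire_fun f" using f by (simp add: Etilde_def)
  moreover have "0 \<le> norm l * Cp" using Cp(1) by simp
  ultimately show ?thesis
    by (intro Etilde_dominated[OF f, where \<sigma> = id and \<alpha> = 1 and \<beta> = 0 and B = 1])
      (simp_all add: entire_fun_mult_exp)
qed

lemma measurable_f0_mult_exp:
  assumes "f0 Phi h \<in> borel_measurable borel"
  shows "f0 Phi (mult_exp l h) \<in> borel_measurable borel"
proof -
  have "(\<lambda>y::(complex^'n)\<times>(real^'m). exp (\<i> * lamC l (ofF (snd y) + \<i> *s ofF (PhiF Phi (fst y)))))
      \<in> borel_measurable borel"
    by (intro borel_measurable_continuous_onI continuous_intros)
  with assms show ?thesis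
    by (simp add: f0_apply[abs_def] mult_exp_apply borel_measurable_times)
qed

lemma Bnorm_mult_exp_le_if_polar:
  assumes p: "p > 0" and l: "l \<in> polar_PhiE Phi" and h: "memLp p (f0 Phi h)"
  shows "memLp p (f0 Phi (mult_exp l h)) \<and> Bnorm Phi p (mult_exp l h) \<le> Bnorm Phi p h"
proof -
  have "norm (f0 Phi (mult_exp l h) y) \<le> norm (f0 Phi h y)" for y
    using l unfolding norm_f0_mult_exp polar_PhiE_def by (simp add: mult_left_le_one_le)
  moreover have "f0 Phi (mult_exp l h) \<in> borel_measurable lborel"
    using h by (simp add: memLp_def measurable_f0_mult_exp)
  ultimately show ?thesis using memLp_Lp_norm_mono[OF p h] by (simp add: Bnorm_def)
qed

lemma cont_map_B_mult_exp_if_polar: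
  assumes p: "p > 0" and l: "l \<in> polar_PhiE Phi"
  shows "cont_map_B Phi p K ((\<lambda>k. k + l) ` K) (mult_exp l)"
  unfolding cont_map_B_def
proof (intro conjI ballI allI impI)
  fix f assume "f \<in> Bspace Phi p K"
  then show "mult_exp l f \<in> Bspace Phi p ((\<lambda>k. k + l) ` K)"
    using Etilde_mult_exp Bnorm_mult_exp_le_if_polar[OF p l] by (auto simp: Bspace_def)
next
  fix fs f
  assume fs: "\<forall>k. fs k \<in> Bspace Phi p K" and f: "f \<in> Bspace Phi p K"
    and lim: "(\<lambda>k. Bnorm Phi p (fs k - f)) \<longlonglongrightarrow> 0"
  have "Bnorm Phi p (mult_exp l (fs k) - mult_exp l f) \<le> Bnorm Phi p (fs k - f)" for k
  proof -
    have "memLp p (f0 Phi (fs k - f))"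
      using fs f memLp_diff[OF p, of "f0 Phi (fs k)" "f0 Phi f"] by (simp add: Bspace_def f0_diff)
    moreover have "mult_exp l (fs k) - mult_exp l f = mult_exp l (fs k - f)"
      by (simp add: mult_exp_apply[abs_def] fun_eq_iff algebra_simps)
    ultimately show ?thesis using Bnorm_mult_exp_le_if_polar[OF p l] by simp
  qed
  then show "(\<lambda>k. Bnorm Phi p (mult_exp l (fs k) - mult_exp l f)) \<longlonglongrightarrow> 0"
    by (intro tendsto_sandwich[OF _ _ tendsto_const lim] always_eventually allI)
      (auto simp: Bnorm_def Lp_norm_nonneg)
qed

end

section \<open>Translations\<close>

text \<open>Composition with the holomorphic action of \<open>(w, 0) \<in> \<N>\<close> on \<open>E \<times> F\<^sub>C\<close>.\<close>
definition translate :: "(complex^'n \<Rightarrow> complex^'n \<Rightarrow> complex^'m) \<Rightarrow> complex^'n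
    \<Rightarrow> ((complex^'n) \<times> (complex^'m) \<Rightarrow> complex) \<Rightarrow> ((complex^'n) \<times> (complex^'m) \<Rightarrow> complex)" where
  "translate Phi w f = (\<lambda>y. f (fst y + w, snd y + \<i> *s (Phi w w + 2 *s Phi (fst y) w)))"

context hermitian_form
begin

lemma rho_translate: "rho Phi (\<zeta> + w) (z + \<i> *s (Phi w w + 2 *s Phi \<zeta> w)) = rho Phi \<zeta> z"
  by (simp add: rho_def PhiF_add vec_eq_iff)

lemma ReF_translate: "ReF (z + \<i> *s (Phi w w + 2 *s Phi \<zeta> w)) = ReF z - 2 *\<^sub>R ImF (Phi \<zeta> w)"
  using Im_Phi_diag[of w] by (simp add: vec_eq_iff)

lemma entire_fun_translate: "entire_fun f \<Longrightarrow> entire_fun (translate Phi w f)"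
proof -
  assume f: "entire_fun f"
  define M where "M = (\<lambda>y::(complex^'n)\<times>(complex^'m). (fst y, snd y + \<i> *s (2 *s Phi (fst y) w)))"
  have "linear M"
    by (rule linearI) (simp_all add: M_def Phi_add_left Phi_scaleR_left vec_eq_iff algebra_simps)
  then have "bounded_linear M" using linear_conv_bounded_linear by blast
  moreover have "M (c *s fst v, c *s snd v) = (c *s fst (M v), c *s snd (M v))" for c v
    by (simp add: M_def Phi_smult_left vec_eq_iff algebra_simps)
  moreover have "translate Phi w f = (\<lambda>y. f ((w, \<i> *s Phi w w) + M y))"
    by (auto simp: translate_def fun_eq_iff M_def vec_eq_iff algebra_simps intro!: arg_cong[where f=f])
  ultimately show ?thesis by (simp add: entire_fun_affine_comp[OF f])
qed

lemma f0_translate: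
  "f0 Phi (translate Phi w f) = (\<lambda>y. f0 Phi f (fst y + w, snd y - 2 *\<^sub>R ImF (Phi (fst y) w)))"
proof -
  have "ofF x + \<i> *s ofF (PhiF Phi \<zeta>) + \<i> *s (Phi w w + 2 *s Phi \<zeta> w)
      = ofF (x - 2 *\<^sub>R ImF (Phi \<zeta> w)) + \<i> *s ofF (PhiF Phi (\<zeta> + w))" for \<zeta> x
    using Im_Phi_diag[of w] by (simp add: vec_eq_iff complex_eq_iff PhiF_add)
  then show ?thesis by (simp add: f0_apply[abs_def] translate_def add.assoc)
qed

lemma translate_growth_le:
  assumes Cp: "\<And>a b. norm (Phi a b) \<le> Cp * norm a * norm b" "0 \<le> Cp"
  shows "(norm (\<zeta> + w))\<^sup>2 + norm (ReF (z + \<i> *s (Phi w w + 2 *s Phi \<zeta> w)))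
    \<le> (2 + Cp * norm w) * ((norm \<zeta>)\<^sup>2 + norm (ReF z)) + (2 * (norm w)\<^sup>2 + Cp * norm w)"
proof -
  have "(norm (\<zeta> + w))\<^sup>2 \<le> (norm \<zeta> + norm w)\<^sup>2"
    by (intro power_mono norm_triangle_ineq) auto
  also have "\<dots> \<le> 2 * (norm \<zeta>)\<^sup>2 + 2 * (norm w)\<^sup>2"
    using zero_le_power2[of "norm \<zeta> - norm w"] by (simp add: power2_eq_square algebra_simps)
  finally have n1: "(norm (\<zeta> + w))\<^sup>2 \<le> 2 * (norm \<zeta>)\<^sup>2 + 2 * (norm w)\<^sup>2" .
  have "norm (ReF (z + \<i> *s (Phi w w + 2 *s Phi \<zeta> w))) \<le> norm (ReF z) + norm (2 *\<^sub>R ImF (Phi \<zeta> w))"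
    unfolding ReF_translate by (rule norm_triangle_ineq4)
  also have "norm (2 *\<^sub>R ImF (Phi \<zeta> w)) \<le> Cp * norm w * (2 * norm \<zeta>)"
    using norm_ImF_le[of "Phi \<zeta> w"] Cp(1)[of \<zeta> w] by (simp add: mult_ac)
  also have "\<dots> \<le> Cp * norm w * ((norm \<zeta>)\<^sup>2 + 1)"
    using Cp(2) zero_le_power2[of "norm \<zeta> - 1"]
    by (intro mult_left_mono) (auto simp: power2_eq_square algebra_simps)
  finally have n2: "norm (ReF (z + \<i> *s (Phi w w + 2 *s Phi \<zeta> w)))
      \<le> norm (ReF z) + Cp * norm w * ((norm \<zeta>)\<^sup>2 + 1)"
    by simp
  have "norm (ReF z) \<le> (2 + Cp * norm w) * norm (ReF z)"
    using Cp(2) by (simp add: mult_le_cancel_right1)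
  with n1 n2 show ?thesis by (simp add: algebra_simps)
qed

lemma Etilde_translate:
  assumes f: "f \<in> Etilde Phi K"
  shows "translate Phi w f \<in> Etilde Phi K"
proof -
  obtain Cp where Cp: "Cp > 0" "\<And>a b. norm (Phi a b) \<le> Cp * norm a * norm b"
    using Phi_bound by blast
  have "translate Phi w f \<in> Etilde Phi ((\<lambda>k. k + 0) ` K)"
  proof (rule Etilde_dominated[OF f, where
        \<sigma> = "\<lambda>y. (fst y + w, snd y + \<i> *s (Phi w w + 2 *s Phi (fst y) w))" and
        \<alpha> = "2 + Cp * norm w" and \<beta> = "2 * (norm w)\<^sup>2 + Cp * norm w" and B = 1 and b = 0])
    show "entire_fun (translate Phi w f)"
      using f entire_fun_translate by (simp add: Etilde_def)
    show "rho Phi (fst (fst y + w, snd y + \<i> *s (Phi w w + 2 *s Phi (fst y) w)))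
        (snd (fst y + w, snd y + \<i> *s (Phi w w + 2 *s Phi (fst y) w))) = rho Phi (fst y) (snd y)" for y
      by (simp only: fst_conv snd_conv rho_translate)
    show "(norm (fst (fst y + w, snd y + \<i> *s (Phi w w + 2 *s Phi (fst y) w))))\<^sup>2
        + norm (ReF (snd (fst y + w, snd y + \<i> *s (Phi w w + 2 *s Phi (fst y) w))))
        \<le> (2 + Cp * norm w) * ((norm (fst y))\<^sup>2 + norm (ReF (snd y))) + (2 * (norm w)\<^sup>2 + Cp * norm w)"
      for y
      unfolding fst_conv snd_conv using Cp by (intro translate_growth_le) auto
  qed (use Cp in \<open>simp_all add: translate_def\<close>)
  then show ?thesis by simp
qed

lemma continuous_on_ImF_Phi: "continuous_on UNIV (\<lambda>\<zeta>. - (2 *\<^sub>R ImF (Phi \<zeta> w)))"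
  by (intro continuous_intros)

lemma Bspace_translate:
  assumes f: "f \<in> Bspace Phi p K"
  shows "translate Phi w f \<in> Bspace Phi p K" and "Bnorm Phi p (translate Phi w f) = Bnorm Phi p f"
proof -
  have "f0 Phi f \<in> borel_measurable borel" using f by (simp add: Bspace_def memLp_def)
  note shear = memLp_Lp_norm_shear[OF this continuous_on_ImF_Phi[of w], where w = w]
  have f0: "f0 Phi (translate Phi w f) = (\<lambda>y. f0 Phi f (fst y + w, snd y + - (2 *\<^sub>R ImF (Phi (fst y) w))))"
    by (simp add: f0_translate)
  show "translate Phi w f \<in> Bspace Phi p K"
    using f Etilde_translate shear(1) by (simp add: Bspace_def f0)
  show "Bnorm Phi p (translate Phi w f) = Bnorm Phi p f"
    unfolding Bnorm_def f0 shear(2) ..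
qed

lemma Bnorm_mult_exp_translate:
  assumes T: "memLp p (f0 Phi (mult_exp l (translate Phi w f)))"
    and f: "f0 Phi f \<in> borel_measurable borel"
  defines "G \<equiv> \<lambda>y. complex_of_real (exp (- (l \<bullet> PhiF Phi (fst y - w)))) * f0 Phi f y"
  shows "memLp p G" and "Bnorm Phi p (mult_exp l (translate Phi w f)) = Lp_norm p G"
proof -
  have "continuous_on UNIV (\<lambda>y::(complex^'n)\<times>(real^'m). complex_of_real (exp (- (l \<bullet> PhiF Phi (fst y - w)))))"
    by (intro continuous_intros)
  then have G_meas: "G \<in> borel_measurable borel"
    unfolding G_def using borel_measurable_times[OF borel_measurable_continuous_onI f] by simp
  note shear = memLp_Lp_norm_shear[OF G_meas continuous_on_ImF_Phi[of w], where w = w]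
  have norm_eq: "norm (f0 Phi (mult_exp l (translate Phi w f)) y)
      = norm (G (fst y + w, snd y + - (2 *\<^sub>R ImF (Phi (fst y) w))))" for y
    by (simp add: norm_f0_mult_exp f0_translate G_def norm_mult)
  have "(\<lambda>y::(complex^'n)\<times>(real^'m). (fst y + w, snd y + - (2 *\<^sub>R ImF (Phi (fst y) w))))
      \<in> borel_measurable borel"
    by (intro borel_measurable_continuous_onI continuous_intros)
  then have meas: "(\<lambda>y. G (fst y + w, snd y + - (2 *\<^sub>R ImF (Phi (fst y) w)))) \<in> borel_measurable lborel"
    using measurable_compose[OF _ G_meas] by simp
  show "memLp p G"
    using memLp_cong_norm[OF T meas norm_eq[symmetric]] shear(1) by blast
  show "Bnorm Phi p (mult_exp l (translate Phi w f)) = Lp_norm p G"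
    unfolding Bnorm_def Lp_norm_cong_norm[OF norm_eq] shear(2) ..
qed

end

section \<open>Unboundedness of the multiplier off the polar\<close>

lemma quadratic_exceeds:
  fixes a b c T :: real
  assumes "a > 0"
  obtains t where "0 \<le> t" "T \<le> a * t\<^sup>2 - b * t - c"
proof -
  define t where "t = max 1 ((\<bar>b\<bar> + \<bar>c\<bar> + \<bar>T\<bar>) / a)"
  have t: "1 \<le> t" "\<bar>b\<bar> + \<bar>c\<bar> + \<bar>T\<bar> \<le> a * t"
    using assms by (auto simp: t_def field_simps max_def)
  have "b * t + c + T \<le> (\<bar>b\<bar> + \<bar>c\<bar> + \<bar>T\<bar>) * t"
    using t(1) abs_ge_self[of b] abs_ge_self[of c] abs_ge_self[of T]
    by (smt (verit) mult_right_mono mult_le_cancel_left1 abs_ge_zero distrib_right)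
  also have "\<dots> \<le> a * t * t"
    using t by (intro mult_right_mono) auto
  finally show ?thesis
    using t by (intro that[of t]) (auto simp: power2_eq_square algebra_simps)
qed

context hermitian_form
begin

lemma f0_bounded_below_on_ball:
  assumes f: "entire_fun f" and nz: "f \<noteq> (\<lambda>_. 0)"
  obtains y\<^sub>1 r \<delta> where "r > 0" "\<delta> > 0" "\<And>y. y \<in> ball y\<^sub>1 r \<Longrightarrow> \<delta> \<le> norm (f0 Phi f y)"
proof -
  obtain y\<^sub>1 where y\<^sub>1: "f0 Phi f y\<^sub>1 \<noteq> 0"
    using entire_fun_eq_0_if_f0_eq_0[OF f] nz by blast
  define \<delta> where "\<delta> = norm (f0 Phi f y\<^sub>1) / 2"
  have \<delta>: "\<delta> > 0" using y\<^sub>1 by (simp add: \<delta>_def)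
  have "isCont (f0 Phi f) y\<^sub>1"
    using continuous_on_f0[OF f, of UNIV] by (simp add: continuous_on_eq_continuous_at del: split_paired_All)
  then obtain r where r: "r > 0" "\<And>y. dist y y\<^sub>1 < r \<Longrightarrow> dist (f0 Phi f y) (f0 Phi f y\<^sub>1) < \<delta>"
    using \<delta> unfolding continuous_at_eps_delta by blast
  have "\<delta> \<le> norm (f0 Phi f y)" if "y \<in> ball y\<^sub>1 r" for y
  proof -
    have "dist (f0 Phi f y) (f0 Phi f y\<^sub>1) < \<delta>" using that r(2)[of y] by (simp add: dist_commute)
    then have "norm (f0 Phi f y\<^sub>1) - norm (f0 Phi f y) < \<delta>"
      by (metis dist_norm norm_minus_commute norm_triangle_ineq2 le_less_trans)
    then show ?thesis by (simp add: \<delta>_def)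
  qed
  with r(1) \<delta> show ?thesis by (rule that)
qed

lemma mult_exp_translate_unbounded:
  assumes p: "p > 0" and \<zeta>\<^sub>0: "lam \<bullet> PhiF Phi \<zeta>\<^sub>0 < 0" and g: "f0 Phi g \<in> borel_measurable borel"
    and r: "r > 0" and \<delta>: "\<delta> > 0" and lower: "\<And>y. y \<in> ball y\<^sub>1 r \<Longrightarrow> \<delta> \<le> norm (f0 Phi g y)"
    and maps: "\<And>t. memLp p (f0 Phi (mult_exp lam (translate Phi (complex_of_real t *s \<zeta>\<^sub>0) g)))"
  obtains t where "M \<le> Bnorm Phi p (mult_exp lam (translate Phi (complex_of_real t *s \<zeta>\<^sub>0) g))"
proof -
  obtain \<kappa> where \<kappa>: "\<kappa> > 0" and Lp_lower: "\<And>F d. memLp p F \<Longrightarrow> 0 \<le> d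
      \<Longrightarrow> (\<And>y. y \<in> ball y\<^sub>1 r \<Longrightarrow> d \<le> norm (F y)) \<Longrightarrow> d * \<kappa> \<le> Lp_norm p F"
    using Lp_norm_ge_on_ball[OF p r] by blast
  define R where "R = norm (fst y\<^sub>1) + r"
  have R: "norm (fst y) \<le> R" if "y \<in> ball y\<^sub>1 r" for y
  proof -
    have "dist (fst y) (fst y\<^sub>1) < r"
      using that dist_fst_le[of y y\<^sub>1] by (simp add: dist_commute)
    then show ?thesis
      using norm_triangle_sub[of "fst y" "fst y\<^sub>1"] by (simp add: R_def dist_norm)
  qed
  obtain Cp where Cp: "Cp > 0" "\<And>a b. norm (Phi a b) \<le> Cp * norm a * norm b"
    using Phi_bound by blast
  define T where "T = ln ((\<bar>M\<bar> + 1) / (\<delta> * \<kappa>))"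
  obtain t where t: "0 \<le> t" and quad: "T
      \<le> - (lam \<bullet> PhiF Phi \<zeta>\<^sub>0) * t\<^sup>2 - 2 * norm lam * Cp * R * norm \<zeta>\<^sub>0 * t - norm lam * Cp * R\<^sup>2"
    using quadratic_exceeds \<zeta>\<^sub>0 by (metis neg_0_less_iff_less)
  define w where "w = complex_of_real t *s \<zeta>\<^sub>0"
  define G where "G = (\<lambda>y. complex_of_real (exp (- (lam \<bullet> PhiF Phi (fst y - w)))) * f0 Phi g y)"
  note G = Bnorm_mult_exp_translate[OF maps[of t, folded w_def] g, folded G_def]
  have "exp T * \<delta> \<le> norm (G y)" if "y \<in> ball y\<^sub>1 r" for y
  proof -
    have "T \<le> - (lam \<bullet> PhiF Phi (fst y - w))"
      using quad inner_PhiF_diff_smult_ge[OF Cp(2) _ R[OF that] t, of lam \<zeta>\<^sub>0] Cp(1)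
      unfolding w_def by linarith
    then show ?thesis
      using lower[OF that] \<delta> by (auto simp: G_def norm_mult intro!: mult_mono)
  qed
  then have "exp T * \<delta> * \<kappa> \<le> Bnorm Phi p (mult_exp lam (translate Phi w g))"
    unfolding G(2) using \<delta> by (intro Lp_lower G(1)) auto
  moreover have "exp T * \<delta> * \<kappa> = \<bar>M\<bar> + 1"
    using \<delta> \<kappa> by (simp add: T_def)
  ultimately show ?thesis
    unfolding w_def by (intro that[of t]) linarith
qed

text \<open>The witness is a translate of a small multiple of \<open>f\<close> by a large multiple of \<open>\<zeta>\<^sub>0\<close>.\<close>
lemma small_with_large_mult_exp:
  assumes p: "p > 0" and \<zeta>\<^sub>0: "lam \<bullet> PhiF Phi \<zeta>\<^sub>0 < 0"
    and f: "f \<in> Bspace Phi p K" "f \<noteq> (\<lambda>_. 0)"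
    and maps: "\<And>g. g \<in> Bspace Phi p K \<Longrightarrow> memLp p (f0 Phi (mult_exp lam g))"
    and \<epsilon>: "\<epsilon> > 0"
  obtains h where "h \<in> Bspace Phi p K" "Bnorm Phi p h \<le> \<epsilon>" "1 \<le> Bnorm Phi p (mult_exp lam h)"
proof -
  have "entire_fun f" using f(1) by (simp add: Bspace_def Etilde_def)
  then obtain y\<^sub>1 r \<delta> where r: "r > 0" and \<delta>: "\<delta> > 0"
    and lower: "\<And>y. y \<in> ball y\<^sub>1 r \<Longrightarrow> \<delta> \<le> norm (f0 Phi f y)"
    using f0_bounded_below_on_ball[OF _ f(2)] by metis
  define c where "c = \<epsilon> / (Bnorm Phi p f + 1)"
  have c: "c > 0" "c * Bnorm Phi p f \<le> \<epsilon>"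
    using \<epsilon> Lp_norm_nonneg[of p "f0 Phi f"] by (auto simp: c_def Bnorm_def field_simps)
  define g where "g = (\<lambda>y. complex_of_real c * f y)"
  have g: "g \<in> Bspace Phi p K" "Bnorm Phi p g = c * Bnorm Phi p f"
    unfolding g_def using Bspace_cmult[OF p c(1) f(1)] by blast+
  have "f0 Phi g \<in> borel_measurable borel" using g(1) by (simp add: Bspace_def memLp_def)
  moreover have "c * \<delta> \<le> norm (f0 Phi g y)" if "y \<in> ball y\<^sub>1 r" for y
    using lower[OF that] c(1) by (simp add: g_def f0_cmult norm_mult)
  moreover have "memLp p (f0 Phi (mult_exp lam (translate Phi w g)))" for w
    using Bspace_translate(1)[OF g(1)] by (rule maps)
  ultimately obtain t where "1 \<le> Bnorm Phi p (mult_exp lam (translate Phi (complex_of_real t *s \<zeta>\<^sub>0) g))"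
    using mult_exp_translate_unbounded[OF p \<zeta>\<^sub>0 _ r, of g "c * \<delta>"] c(1) \<delta> by (metis mult_pos_pos)
  then show ?thesis
    using Bspace_translate[OF g(1)] g(2) c(2) by (intro that) auto
qed

lemma polar_if_cont_map_B_mult_exp:
  assumes p: "p > 0" and nontrivial: "Bspace Phi p K \<noteq> {\<lambda>_. 0}"
    and cont: "cont_map_B Phi p K ((\<lambda>k. k + lam) ` K) (mult_exp lam)"
  shows "lam \<in> polar_PhiE Phi"
proof (rule ccontr)
  assume "lam \<notin> polar_PhiE Phi"
  then obtain \<zeta>\<^sub>0 where \<zeta>\<^sub>0: "lam \<bullet> PhiF Phi \<zeta>\<^sub>0 < 0" unfolding polar_PhiE_def by (auto simp: not_le)
  obtain f where f: "f \<in> Bspace Phi p K" "f \<noteq> (\<lambda>_. 0)"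
    using nontrivial zero_in_Bspace[OF p] by blast
  have maps: "\<And>g. g \<in> Bspace Phi p K \<Longrightarrow> memLp p (f0 Phi (mult_exp lam g))"
    using cont by (auto simp: cont_map_B_def Bspace_def)
  have "\<exists>h. h \<in> Bspace Phi p K \<and> Bnorm Phi p h \<le> 1 / Suc k \<and> 1 \<le> Bnorm Phi p (mult_exp lam h)" for k
    using small_with_large_mult_exp[OF p \<zeta>\<^sub>0 f maps, of "1 / Suc k"] by auto
  then obtain hs where hs: "\<And>k. hs k \<in> Bspace Phi p K" "\<And>k. Bnorm Phi p (hs k) \<le> 1 / Suc k"
      "\<And>k. 1 \<le> Bnorm Phi p (mult_exp lam (hs k))"
    by metis
  have "(\<lambda>k. Bnorm Phi p (hs k - (\<lambda>_. 0))) \<longlonglongrightarrow> 0"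
    using hs(2) by (intro tendsto_sandwich[OF _ _ tendsto_const LIMSEQ_Suc[OF lim_inverse_n']]
        always_eventually allI) (auto simp: Bnorm_def Lp_norm_nonneg divide_inverse fun_diff_def)
  then have "(\<lambda>k. Bnorm Phi p (mult_exp lam (hs k) - mult_exp lam (\<lambda>_. 0))) \<longlonglongrightarrow> 0"
    using cont hs(1) zero_in_Bspace[OF p] unfolding cont_map_B_def by blast
  moreover have "mult_exp lam (hs k) - mult_exp lam (\<lambda>_. 0) = mult_exp lam (hs k)" for k
    by (simp add: fun_eq_iff mult_exp_apply)
  ultimately have "(\<lambda>k. Bnorm Phi p (mult_exp lam (hs k))) \<longlonglongrightarrow> 0" by simp
  then show False
    using hs(3) LIMSEQ_le_const[of _ 0 1] by fastforce
qed

end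

theorem proposition3p5:
  fixes Phi :: "complex^'n \<Rightarrow> complex^'n \<Rightarrow> complex^'m"
    and p :: ennreal and lam :: "real^'m" and K :: "(real^'m) set"
  assumes "hermitian_map Phi"
    and "p > 0"
    and "compact K" and "convex K"
    and "Bspace Phi p K \<noteq> {\<lambda>_. 0}"
  shows "cont_map_B Phi p K ((\<lambda>k. k + lam) ` K) (mult_exp lam) \<longleftrightarrow> lam \<in> polar_PhiE Phi"
proof -
  interpret hermitian_form Phi by unfold_locales (rule assms(1))
  show ?thesis
    using polar_if_cont_map_B_mult_exp[OF assms(2,5)] cont_map_B_mult_exp_if_polar[OF assms(2)]
    by blast
qed

end
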